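(* Let $G$ be a directed graph on vertex set $V$ with $|V|=n$ odd and integer edge weights in $[-M,M]$, $M\ge1$; extend $w$ to all ordered pairs $(u,v)\in V\times V$ (including $u=v$) by setting $w(u,v)=4M$ when $(u,v)$ is not an edge. Let $H=100M$. Let $G'$ be the undirected graph with vertex set $\{u_A,u_B,u_{B'},u_C,u_{C'}:u\in V\}$ and, for all $u,v\in V$ (not necessarily distinct), edges $u_A v_B$ of weight $3H+w(u,v)$, $u_A v_{B'}$ of weight $3H-w(u,v)$, $u_A v_C$ of weight $6H-w(v,u)$, $u_A v_{C'}$ of weight $3H+w(v,u)$, $u_Bv_C$ of weight $3H+w(u,v)$, and (for $u\ne v$) $u_Av_A$ of weight $H$. Let $G'_0$ be $G'$ with every weight multiplied by $4n$, and write $A=\{u_A:u\in V\}$. For $S\subseteq A$ let $G'_S$ be obtained from $G'_0$ by subtracting $1$ from the weight of every edge $s v_B$ and $s v_C$ with $s\in S$, and adding $1$ to the weight of every edge $s v_{B'}$ with $s\in S$. Then the median value $\min_{p}\sum_{q}d_{G'_S}(p,q)$ of $G'_S$ is odd if and only if $S$ contains a vertex $p$ attaining $\min_{p}\sum_q d_{G'}(p,q)$.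
   Context: $d_X(p,q)$ denotes shortest-path distance in the weighted graph $X$; sums $\sum_q$ range over all vertices of the graph. *)

theory Defs
  imports Main
begin

text \<open>A weighted graph on vertex set Vs is a function g with g x y = Some c iff xy is an
edge of weight c (g is assumed symmetric for undirected graphs).\<close>

fun walk_weight :: "('v \<Rightarrow> 'v \<Rightarrow> int option) \<Rightarrow> 'v list \<Rightarrow> int" where
  "walk_weight g (x # y # xs) = the (g x y) + walk_weight g (y # xs)"
| "walk_weight g _ = 0"

definition is_walk :: "'v set \<Rightarrow> ('v \<Rightarrow> 'v \<Rightarrow> int option) \<Rightarrow> 'v list \<Rightarrow> bool" where
  "is_walk Vs g xs \<longleftrightarrow> xs \<noteq> [] \<and> set xs \<subseteq> Vs \<and>
     (\<forall>i. Suc i < length xs \<longrightarrow> g (xs ! i) (xs ! Suc i) \<noteq> None)"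

definition gdist :: "'v set \<Rightarrow> ('v \<Rightarrow> 'v \<Rightarrow> int option) \<Rightarrow> 'v \<Rightarrow> 'v \<Rightarrow> int" where
  "gdist Vs g p q = Inf {walk_weight g xs | xs. is_walk Vs g xs \<and> hd xs = p \<and> last xs = q}"

definition dist_sum :: "'v set \<Rightarrow> ('v \<Rightarrow> 'v \<Rightarrow> int option) \<Rightarrow> 'v \<Rightarrow> int" where
  "dist_sum Vs g p = (\<Sum>q\<in>Vs. gdist Vs g p q)"

definition median_value :: "'v set \<Rightarrow> ('v \<Rightarrow> 'v \<Rightarrow> int option) \<Rightarrow> int" where
  "median_value Vs g = Min (dist_sum Vs g ` Vs)"

datatype part = PA | PB | PB' | PC | PC'

definition wext :: "('a \<times> 'a) set \<Rightarrow> ('a \<Rightarrow> 'a \<Rightarrow> int) \<Rightarrow> int \<Rightarrow> 'a \<Rightarrow> 'a \<Rightarrow> int" where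
  "wext E w M u v = (if (u, v) \<in> E then w u v else 4 * M)"

text \<open>Edges of G' in one canonical orientation; H = 100M.\<close>
fun gp_dir :: "'a set \<Rightarrow> ('a \<times> 'a) set \<Rightarrow> ('a \<Rightarrow> 'a \<Rightarrow> int) \<Rightarrow> int
     \<Rightarrow> 'a \<times> part \<Rightarrow> 'a \<times> part \<Rightarrow> int option" where
  "gp_dir V E w M (u, PA) (v, PB) =
     (if u \<in> V \<and> v \<in> V then Some (3 * (100 * M) + wext E w M u v) else None)"
| "gp_dir V E w M (u, PA) (v, PB') =
     (if u \<in> V \<and> v \<in> V then Some (3 * (100 * M) - wext E w M u v) else None)"
| "gp_dir V E w M (u, PA) (v, PC) =
     (if u \<in> V \<and> v \<in> V then Some (6 * (100 * M) - wext E w M v u) else None)"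
| "gp_dir V E w M (u, PA) (v, PC') =
     (if u \<in> V \<and> v \<in> V then Some (3 * (100 * M) + wext E w M v u) else None)"
| "gp_dir V E w M (u, PB) (v, PC) =
     (if u \<in> V \<and> v \<in> V then Some (3 * (100 * M) + wext E w M u v) else None)"
| "gp_dir V E w M (u, PA) (v, PA) =
     (if u \<in> V \<and> v \<in> V \<and> u \<noteq> v then Some (100 * M) else None)"
| "gp_dir V E w M _ _ = None"

definition gp :: "'a set \<Rightarrow> ('a \<times> 'a) set \<Rightarrow> ('a \<Rightarrow> 'a \<Rightarrow> int) \<Rightarrow> int
     \<Rightarrow> 'a \<times> part \<Rightarrow> 'a \<times> part \<Rightarrow> int option" where
  "gp V E w M x y = (case gp_dir V E w M x y of Some c \<Rightarrow> Some c | None \<Rightarrow> gp_dir V E w M y x)"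

definition gp_verts :: "'a set \<Rightarrow> ('a \<times> part) set" where
  "gp_verts V = V \<times> UNIV"

fun pert_dir :: "('a \<times> part) set \<Rightarrow> 'a \<times> part \<Rightarrow> 'a \<times> part \<Rightarrow> int" where
  "pert_dir S s (v, PB) = (if s \<in> S then -1 else 0)"
| "pert_dir S s (v, PC) = (if s \<in> S then -1 else 0)"
| "pert_dir S s (v, PB') = (if s \<in> S then 1 else 0)"
| "pert_dir S s _ = 0"

definition gpS :: "'a set \<Rightarrow> ('a \<times> 'a) set \<Rightarrow> ('a \<Rightarrow> 'a \<Rightarrow> int) \<Rightarrow> int \<Rightarrow> ('a \<times> part) set
     \<Rightarrow> 'a \<times> part \<Rightarrow> 'a \<times> part \<Rightarrow> int option" where
  "gpS V E w M S x y = (case gp V E w M x y of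
      None \<Rightarrow> None
    | Some c \<Rightarrow> Some (4 * int (card V) * c + pert_dir S x y + pert_dir S y x))"

end

theory Submission
  imports Defs
begin

text \<open>Distances from a vertex u_A of G' are explicit: the potential d_A u is feasible and
  attained by walks of at most two edges. Every edge of G' is either slack by at least 1 for
  d_A u, or the perturbation pert_A u is feasible on it as well; after scaling by 4n the slack
  absorbs perturbations of size 1, so 4n d_A u + pert_A u is the distance from u_A in G'_S.
  Summing, the distance sum of u_A in G'_S is 4n times that in G', minus n if u_A \<in> S.
  Vertices outside A are far from all others, so both medians are attained on A. Hence the
  median value of G'_S is 4nm - n if S contains a minimiser and 4nm otherwise, where m is the
  median value of G', and n is odd.\<close>

lemma is_walk_singleton [simp]: "is_walk Vs g [x] \<longleftrightarrow> x \<in> Vs"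
  by (auto simp: is_walk_def)

lemma is_walk_Cons_Cons [simp]:
  "is_walk Vs g (x # y # xs) \<longleftrightarrow> x \<in> Vs \<and> g x y \<noteq> None \<and> is_walk Vs g (y # xs)"
proof
  assume h: "is_walk Vs g (x # y # xs)"
  have "g x y \<noteq> None" using h unfolding is_walk_def by (auto dest: spec[of _ 0])
  moreover have "is_walk Vs g (y # xs)" using h unfolding is_walk_def
    by (auto dest!: spec[of _ "Suc i" for i])
  ultimately show "x \<in> Vs \<and> g x y \<noteq> None \<and> is_walk Vs g (y # xs)"
    using h by (auto simp: is_walk_def)
next
  assume h: "x \<in> Vs \<and> g x y \<noteq> None \<and> is_walk Vs g (y # xs)"
  show "is_walk Vs g (x # y # xs)" unfolding is_walk_def
  proof (intro conjI allI impI)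
    show "set (x # y # xs) \<subseteq> Vs" using h by (auto simp: is_walk_def)
    fix i assume "Suc i < length (x # y # xs)"
    then show "g ((x # y # xs) ! i) ((x # y # xs) ! Suc i) \<noteq> None"
      using h by (cases i) (auto simp: is_walk_def)
  qed simp
qed

lemma is_walk_cong:
  assumes "\<And>x y. g x y = None \<longleftrightarrow> h x y = None"
  shows "is_walk Vs g xs \<longleftrightarrow> is_walk Vs h xs"
  using assms by (simp add: is_walk_def)

definition potential :: "'v set \<Rightarrow> ('v \<Rightarrow> 'v \<Rightarrow> int option) \<Rightarrow> ('v \<Rightarrow> int) \<Rightarrow> bool" where
  "potential Vs g f \<longleftrightarrow> (\<forall>x\<in>Vs. \<forall>y\<in>Vs. \<forall>c. g x y = Some c \<longrightarrow> f y \<le> f x + c)"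

lemma walk_weight_ge_potential_diff:
  "is_walk Vs g xs \<Longrightarrow> potential Vs g f \<Longrightarrow> f (last xs) - f (hd xs) \<le> walk_weight g xs"
proof (induction g xs rule: walk_weight.induct)
  case (1 g x y xs)
  then have walk: "is_walk Vs g (y # xs)" and x: "x \<in> Vs" and "g x y \<noteq> None" by auto
  then obtain c where c: "g x y = Some c" by auto
  have "y \<in> Vs" using walk by (auto simp: is_walk_def)
  then have "f y \<le> f x + c" using "1.prems"(2) x c by (auto simp: potential_def)
  moreover have "f (last (y # xs)) - f y \<le> walk_weight g (y # xs)" using 1 walk by simp
  ultimately show ?case using c by simp
qed (auto simp: is_walk_def)

lemma gdist_ge_potential_diff:
  assumes "potential Vs g f" "is_walk Vs g xs" "hd xs = p" "last xs = q"
  shows "f q - f p \<le> gdist Vs g p q"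
  unfolding gdist_def
proof (rule cInf_greatest)
  show "{walk_weight g xs |xs. is_walk Vs g xs \<and> hd xs = p \<and> last xs = q} \<noteq> {}"
    using assms(2-4) by auto
qed (use walk_weight_ge_potential_diff[OF _ assms(1)] in blast)

lemma gdist_le_walk_weight:
  assumes "potential Vs g f" "is_walk Vs g xs" "hd xs = p" "last xs = q"
  shows "gdist Vs g p q \<le> walk_weight g xs"
  unfolding gdist_def
proof (rule cInf_lower)
  show "bdd_below {walk_weight g xs |xs. is_walk Vs g xs \<and> hd xs = p \<and> last xs = q}"
    unfolding bdd_below_def using walk_weight_ge_potential_diff[OF _ assms(1)]
    by (intro exI[of _ "f q - f p"]) auto
qed (use assms(2-4) in auto)

lemma gdist_eq_potential_diff:
  assumes "potential Vs g f" "is_walk Vs g xs" "hd xs = p" "last xs = q"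
    and "walk_weight g xs = f q - f p"
  shows "gdist Vs g p q = f q - f p"
  using gdist_ge_potential_diff[OF assms(1-4)] gdist_le_walk_weight[OF assms(1-4)] assms(5)
  by linarith

lemma dist_sum_ge_potential_sum:
  assumes "potential Vs g f" "f p = 0"
    and "\<And>q. q \<in> Vs \<Longrightarrow> \<exists>xs. is_walk Vs g xs \<and> hd xs = p \<and> last xs = q"
  shows "(\<Sum>q\<in>Vs. f q) \<le> dist_sum Vs g p"
  unfolding dist_sum_def
proof (rule sum_mono)
  fix q assume "q \<in> Vs"
  with assms(3) obtain xs where "is_walk Vs g xs" "hd xs = p" "last xs = q" by blast
  from gdist_ge_potential_diff[OF assms(1) this] show "f q \<le> gdist Vs g p q"
    using assms(2) by simp
qed

lemma potential_scaled_level: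
  assumes "0 \<le> K"
    and "\<And>x y c. x \<in> Vs \<Longrightarrow> y \<in> Vs \<Longrightarrow> g x y = Some c \<Longrightarrow>
           0 \<le> c \<and> (t y \<le> t x \<or> t y \<le> t x + 1 \<and> K \<le> c)"
  shows "potential Vs g (\<lambda>q. K * t q)"
  unfolding potential_def
proof (intro ballI allI impI)
  fix x y c assume "x \<in> Vs" "y \<in> Vs" "g x y = Some c"
  with assms(2) consider "0 \<le> c" "t y \<le> t x" | "t y \<le> t x + 1" "K \<le> c" by blast
  then show "K * t y \<le> K * t x + c"
  proof cases
    case 1
    then have "K * t y \<le> K * t x" using assms(1) by (intro mult_left_mono)
    with 1 show ?thesis by linarith
  next
    case 2
    then have "K * t y \<le> K * (t x + 1)" using assms(1) by (intro mult_left_mono)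
    with 2 show ?thesis by (simp add: algebra_simps)
  qed
qed

text \<open>Scaling by N \<ge> 3 turns every edge of slack at least 1 into one of slack at least 3,
  which absorbs perturbations of size 1 of the weights and of the potential.\<close>
lemma potential_scaled_perturbed:
  assumes g': "\<And>x y. g' x y = map_option (\<lambda>c. N * c + pp x y) (g x y)"
    and "3 \<le> N" "\<And>x y. \<bar>pp x y\<bar> \<le> 1" "\<And>q. \<bar>h q\<bar> \<le> 1"
    and slack: "\<And>x y c. x \<in> Vs \<Longrightarrow> y \<in> Vs \<Longrightarrow> g x y = Some c \<Longrightarrow>
           f y + 1 \<le> f x + c \<or> f y \<le> f x + c \<and> h y \<le> h x + pp x y"
  shows "potential Vs g' (\<lambda>q. N * f q + h q)"
  unfolding potential_def
proof (intro ballI allI impI)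
  fix x y c' assume "x \<in> Vs" "y \<in> Vs" "g' x y = Some c'"
  then obtain c where c: "g x y = Some c" and c': "c' = N * c + pp x y" by (auto simp: g')
  have bounds: "\<bar>pp x y\<bar> \<le> 1" "\<bar>h x\<bar> \<le> 1" "\<bar>h y\<bar> \<le> 1" using assms(3,4) by auto
  from slack[OF \<open>x \<in> Vs\<close> \<open>y \<in> Vs\<close> c] show "N * f y + h y \<le> N * f x + h x + c'"
  proof
    assume "f y + 1 \<le> f x + c"
    then have "N * (f y + 1) \<le> N * (f x + c)" using assms(2) by (intro mult_left_mono) auto
    then show ?thesis using bounds assms(2) unfolding c' by (simp add: algebra_simps)
  next
    assume tight: "f y \<le> f x + c \<and> h y \<le> h x + pp x y"
    then have "N * f y \<le> N * (f x + c)" using assms(2) by (intro mult_left_mono) auto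
    then show ?thesis using tight unfolding c' by (simp add: algebra_simps)
  qed
qed

lemma Min_image_eq_Min_image_subset:
  assumes "finite X" "Y \<subseteq> X" "Y \<noteq> {}" "\<And>x. x \<in> X \<Longrightarrow> \<exists>y\<in>Y. f y \<le> f x"
  shows "Min (f ` X) = Min (f ` Y)"
proof (rule antisym)
  show "Min (f ` X) \<le> Min (f ` Y)"
    using assms(1-3) by (intro Min_antimono) (auto intro: finite_subset)
  have "finite Y" using assms(1,2) by (rule finite_subset[rotated])
  show "Min (f ` Y) \<le> Min (f ` X)"
  proof (subst Min_ge_iff)
    show "\<forall>a\<in>f ` X. Min (f ` Y) \<le> a"
      using assms(4) \<open>finite Y\<close> by (fastforce intro: order.trans[OF Min_le])
  qed (use assms(1,2,3) in auto)
qed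

lemma Min_scaled_minus_indicator:
  fixes D :: "'a \<Rightarrow> int" and N n :: int
  assumes "finite V" "V \<noteq> {}" "0 \<le> n" "n \<le> N"
  shows "Min ((\<lambda>v. N * D v - (if P v then n else 0)) ` V) =
    N * Min (D ` V) - (if \<exists>v\<in>V. P v \<and> D v = Min (D ` V) then n else 0)"
proof (rule Min_eqI)
  let ?m = "Min (D ` V)"
  have m_le: "?m \<le> D v" if "v \<in> V" for v using assms(1) that by simp
  fix y assume "y \<in> (\<lambda>v. N * D v - (if P v then n else 0)) ` V"
  then obtain v where v: "v \<in> V" and y: "y = N * D v - (if P v then n else 0)" by blast
  show "N * ?m - (if \<exists>v\<in>V. P v \<and> D v = ?m then n else 0) \<le> y"
  proof (cases "D v = ?m")
    case True
    then show ?thesis using v assms(3) unfolding y by auto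
  next
    case False
    then have "N * (?m + 1) \<le> N * D v" using m_le[OF v] assms(3,4) by (intro mult_left_mono) auto
    then show ?thesis using assms(3,4) unfolding y by (auto simp: algebra_simps)
  qed
next
  let ?m = "Min (D ` V)"
  have "?m \<in> D ` V" using assms(1,2) by (intro Min_in) auto
  then obtain v0 where v0: "D v0 = ?m" "v0 \<in> V" by (metis imageE)
  show "N * ?m - (if \<exists>v\<in>V. P v \<and> D v = ?m then n else 0)
          \<in> (\<lambda>v. N * D v - (if P v then n else 0)) ` V"
  proof (cases "\<exists>v\<in>V. P v \<and> D v = ?m")
    case True
    then obtain v where "v \<in> V" "P v" "D v = ?m" by blast
    then show ?thesis using True by (intro image_eqI[of _ _ v]) auto
  next
    case False
    then show ?thesis using v0 by (intro image_eqI[of _ _ v0]) auto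
  qed
qed (use assms(1) in simp)

lemma UNIV_part: "(UNIV :: part set) = {PA, PB, PB', PC, PC'}"
  using part.exhaust by auto

lemma sum_gp_verts:
  "(\<Sum>q\<in>gp_verts V. f q) = (\<Sum>v\<in>V. f (v, PA) + f (v, PB) + f (v, PB') + f (v, PC) + f (v, PC'))"
proof -
  have "(\<Sum>v\<in>V. \<Sum>P\<in>UNIV. f (v, P)) = (\<Sum>(v, P)\<in>V \<times> UNIV. f (v, P))"
    by (rule sum.cartesian_product)
  then show ?thesis unfolding UNIV_part gp_verts_def by (simp add: add.assoc)
qed

locale gp_construction =
  fixes V :: "'a set" and E :: "('a \<times> 'a) set" and w :: "'a \<Rightarrow> 'a \<Rightarrow> int" and M :: int
    and S :: "('a \<times> part) set"
  assumes finite_V: "finite V" and V_nonempty: "V \<noteq> {}" and M_ge_1: "1 \<le> M"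
    and weight_bound: "\<forall>(u, v)\<in>E. \<bar>w u v\<bar> \<le> M" and S_subset_A: "S \<subseteq> (\<lambda>u. (u, PA)) ` V"
begin

abbreviation "wx \<equiv> wext E w M"
abbreviation "Vs \<equiv> gp_verts V"
abbreviation "G \<equiv> gp V E w M"
abbreviation "GS \<equiv> gpS V E w M S"
abbreviation "N \<equiv> 4 * int (card V)"

lemma wext_bounds: "-M \<le> wx u v \<and> wx u v \<le> 4 * M"
  using weight_bound M_ge_1 by (auto simp: wext_def)

lemma card_V_ge_1: "1 \<le> card V"
  using finite_V V_nonempty by (simp add: Suc_le_eq card_gt_0_iff)

lemma finite_gp_verts: "finite Vs"
  unfolding gp_verts_def UNIV_part using finite_V by simp

text \<open>The distance from u_A to v_C: either the direct edge, or a detour through some x_B.\<close>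
definition d_AC :: "'a \<Rightarrow> 'a \<Rightarrow> int" where
  "d_AC u v = Min (insert (600 * M - wx v u) ((\<lambda>x. 600 * M + wx u x + wx x v) ` V))"

lemma d_AC_le_direct: "d_AC u v \<le> 600 * M - wx v u"
  unfolding d_AC_def using finite_V by simp

lemma d_AC_le_via: "x \<in> V \<Longrightarrow> d_AC u v \<le> 600 * M + wx u x + wx x v"
  unfolding d_AC_def using finite_V by simp

lemma d_AC_ge: "596 * M \<le> d_AC u v"
proof -
  have "596 * M \<le> 600 * M + wx u x + wx x v" for x
    using wext_bounds[of u x] wext_bounds[of x v] by linarith
  moreover have "596 * M \<le> 600 * M - wx v u" using wext_bounds[of v u] by linarith
  ultimately show ?thesis unfolding d_AC_def using finite_V by (simp add: Min_ge_iff)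
qed

lemma d_AC_cases:
  obtains "d_AC u v = 600 * M - wx v u"
  | x where "x \<in> V" "d_AC u v = 600 * M + wx u x + wx x v"
proof -
  have "d_AC u v \<in> insert (600 * M - wx v u) ((\<lambda>x. 600 * M + wx u x + wx x v) ` V)"
    unfolding d_AC_def using finite_V by (intro Min_in) auto
  then show ?thesis using that by auto
qed

definition d_A :: "'a \<Rightarrow> 'a \<times> part \<Rightarrow> int" where
  "d_A u q = (case q of
       (v, PA) \<Rightarrow> if v = u then 0 else 100 * M
     | (v, PB) \<Rightarrow> 300 * M + wx u v
     | (v, PB') \<Rightarrow> 300 * M - wx u v
     | (v, PC) \<Rightarrow> d_AC u v
     | (v, PC') \<Rightarrow> 300 * M + wx v u)"

definition in_S :: "'a \<Rightarrow> int" where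
  "in_S u = (if (u, PA) \<in> S then 1 else 0)"

text \<open>The change of the distances from u_A caused by the perturbation, before scaling.\<close>
definition pert_A :: "'a \<Rightarrow> 'a \<times> part \<Rightarrow> int" where
  "pert_A u q = (case q of (v, PB) \<Rightarrow> - in_S u | (v, PB') \<Rightarrow> in_S u | (v, PC) \<Rightarrow> - in_S u | _ \<Rightarrow> 0)"

definition pert :: "'a \<times> part \<Rightarrow> 'a \<times> part \<Rightarrow> int" where
  "pert x y = pert_dir S x y + pert_dir S y x"

definition dS_A :: "'a \<Rightarrow> 'a \<times> part \<Rightarrow> int" where
  "dS_A u q = N * d_A u q + pert_A u q"

lemma S_only_A [simp]: "(a, PB) \<notin> S" "(a, PB') \<notin> S" "(a, PC) \<notin> S" "(a, PC') \<notin> S"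
  using S_subset_A by auto

lemma gpS_eq: "GS x y = map_option (\<lambda>c. N * c + pert x y) (G x y)"
  by (auto simp: gpS_def pert_def split: option.splits)

lemma is_walk_gpS_iff: "is_walk Vs GS xs \<longleftrightarrow> is_walk Vs G xs"
  by (rule is_walk_cong) (simp add: gpS_eq)

lemma abs_pert_le_1: "\<bar>pert x y\<bar> \<le> 1"
  by (cases x; cases y; cases "snd x"; cases "snd y") (auto simp: pert_def)

lemma abs_pert_A_le_1: "\<bar>pert_A u q\<bar> \<le> 1"
  by (cases q; cases "snd q") (auto simp: pert_A_def in_S_def)

lemma gp_edge_slack:
  assumes "G x y = Some c"
  shows "d_A u y + 1 \<le> d_A u x + c \<or> d_A u y \<le> d_A u x + c \<and> pert_A u y \<le> pert_A u x + pert x y"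
proof -
  obtain a P b Q where xy: "x = (a, P)" "y = (b, Q)" by (cases x, cases y) auto
  note bounds = wext_bounds[of u b] wext_bounds[of a b] wext_bounds[of b a] wext_bounds[of b u]
    wext_bounds[of u a] wext_bounds[of a u] d_AC_ge[of u b] d_AC_ge[of u a]
    d_AC_le_direct[of u b] d_AC_le_direct[of u a]
  have via: "a \<in> V \<Longrightarrow> d_AC u b \<le> 600 * M + wx u a + wx a b"
    "b \<in> V \<Longrightarrow> d_AC u a \<le> 600 * M + wx u b + wx b a"
    by (auto intro: d_AC_le_via)
  show ?thesis using assms M_ge_1 bounds via unfolding xy
    by (cases P; cases Q) (auto simp: gp_def d_A_def pert_A_def pert_def in_S_def split: if_splits)
qed

lemma potential_d_A: "potential Vs G (d_A u)"
  unfolding potential_def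
proof (intro ballI allI impI)
  fix x y c assume "G x y = Some c"
  from gp_edge_slack[OF this, of u] show "d_A u y \<le> d_A u x + c" by linarith
qed

lemma potential_dS_A: "potential Vs GS (dS_A u)"
  unfolding dS_A_def
proof (rule potential_scaled_perturbed[where g = G])
  show "3 \<le> N" using card_V_ge_1 by simp
qed (use gpS_eq abs_pert_le_1 abs_pert_A_le_1 gp_edge_slack in blast)+

lemma shortest_walk_from_A:
  assumes u: "u \<in> V" and q: "q \<in> Vs"
  shows "\<exists>xs. is_walk Vs G xs \<and> hd xs = (u, PA) \<and> last xs = q \<and>
    walk_weight G xs = d_A u q \<and> walk_weight GS xs = dS_A u q"
proof -
  obtain v Q where q_eq: "q = (v, Q)" and v: "v \<in> V" using q by (cases q) (auto simp: gp_verts_def)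
  note defs = q_eq gp_verts_def d_A_def dS_A_def pert_A_def gpS_eq gp_def pert_def in_S_def
  consider "q = (u, PA)"
    | "q \<noteq> (u, PA)" "Q = PC \<Longrightarrow> d_AC u v = 600 * M - wx v u"
    | x where "Q = PC" "x \<in> V" "d_AC u v = 600 * M + wx u x + wx x v"
    by (cases "Q = PC"; cases "q = (u, PA)") (auto elim: d_AC_cases[of u v])
  then show ?thesis
  proof cases
    case 1
    then show ?thesis using u by (intro exI[of _ "[q]"]) (auto simp: defs)
  next
    case 2
    then show ?thesis using u v by (intro exI[of _ "[(u, PA), q]"]) (cases Q; auto simp: defs)
  next
    case (3 x)
    then show ?thesis using u v
      by (intro exI[of _ "[(u, PA), (x, PB), q]"]) (auto simp: defs algebra_simps)
  qed
qed

lemma gdist_from_A: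
  assumes "u \<in> V" "q \<in> Vs"
  shows "gdist Vs G (u, PA) q = d_A u q" and "gdist Vs GS (u, PA) q = dS_A u q"
proof -
  obtain xs where xs: "is_walk Vs G xs" "hd xs = (u, PA)" "last xs = q"
    "walk_weight G xs = d_A u q" "walk_weight GS xs = dS_A u q"
    using shortest_walk_from_A[OF assms] by blast
  have zero: "d_A u (u, PA) = 0" "dS_A u (u, PA) = 0" by (auto simp: d_A_def dS_A_def pert_A_def)
  show "gdist Vs G (u, PA) q = d_A u q"
    using gdist_eq_potential_diff[OF potential_d_A[of u] xs(1-3)] xs(4) zero by simp
  show "gdist Vs GS (u, PA) q = dS_A u q"
    using gdist_eq_potential_diff[OF potential_dS_A[of u] xs(1)[folded is_walk_gpS_iff] xs(2,3)]
      xs(5) zero by simp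
qed

lemma dist_sum_A: "u \<in> V \<Longrightarrow> dist_sum Vs G (u, PA) = (\<Sum>q\<in>Vs. d_A u q)"
  unfolding dist_sum_def by (simp add: gdist_from_A)

lemma dist_sum_gpS_A:
  assumes "u \<in> V"
  shows "dist_sum Vs GS (u, PA) =
    N * dist_sum Vs G (u, PA) - (if (u, PA) \<in> S then int (card V) else 0)"
proof -
  have "dist_sum Vs GS (u, PA) = (\<Sum>q\<in>Vs. dS_A u q)"
    unfolding dist_sum_def using gdist_from_A(2)[OF assms] by simp
  also have "\<dots> = N * (\<Sum>q\<in>Vs. d_A u q) + (\<Sum>q\<in>Vs. pert_A u q)"
    unfolding dS_A_def by (simp add: sum.distrib sum_distrib_left)
  also have "(\<Sum>q\<in>Vs. pert_A u q) = - (if (u, PA) \<in> S then int (card V) else 0)"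
    unfolding sum_gp_verts by (simp add: pert_A_def in_S_def)
  finally show ?thesis using dist_sum_A[OF assms] by simp
qed

lemma dist_sum_A_le: "u \<in> V \<Longrightarrow> dist_sum Vs G (u, PA) \<le> int (card V) * (1600 * M)"
  unfolding dist_sum_A sum_gp_verts
proof (rule sum_bounded_above)
  fix v
  show "d_A u (v, PA) + d_A u (v, PB) + d_A u (v, PB') + d_A u (v, PC) + d_A u (v, PC') \<le> 1600 * M"
    using d_AC_le_direct[of u v] M_ge_1 by (cases "v = u") (simp_all add: d_A_def)
qed

text \<open>Every walk from a vertex p outside A needs an edge of weight at least 296M to reach a
  vertex of level 1, and another one to go on to level 2.\<close>
definition level :: "'a \<times> part \<Rightarrow> 'a \<times> part \<Rightarrow> int" where
  "level p q = (if q = p then 0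
     else if snd q = PA \<or> {snd p, snd q} = {PB, PC} then 1 else 2)"

lemma gp_edge_level:
  assumes "snd p \<noteq> PA" "G x y = Some c"
  shows "100 * M \<le> c \<and> (level p y \<le> level p x \<or> level p y \<le> level p x + 1 \<and> 296 * M \<le> c)"
proof -
  obtain a P b Q where xy: "x = (a, P)" "y = (b, Q)" by (cases x, cases y) auto
  obtain u0 P0 where p: "p = (u0, P0)" by (cases p) auto
  show ?thesis using assms M_ge_1 wext_bounds[of a b] wext_bounds[of b a] unfolding xy p
    by (cases P; cases Q; cases P0) (auto simp: gp_def level_def split: if_splits)
qed

lemma gpS_edge_level:
  assumes "snd p \<noteq> PA" "GS x y = Some c'"
  shows "0 \<le> c' \<and> (level p y \<le> level p x \<or> level p y \<le> level p x + 1 \<and> N * (296 * M) - 1 \<le> c')"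
proof -
  obtain c where c: "G x y = Some c" and c': "c' = N * c + pert x y"
    using assms(2) by (auto simp: gpS_eq)
  have edge: "100 * M \<le> c" "level p y \<le> level p x \<or> level p y \<le> level p x + 1 \<and> 296 * M \<le> c"
    using gp_edge_level[OF assms(1) c] by auto
  have "4 \<le> N" using card_V_ge_1 by simp
  moreover have "N * 1 \<le> N * c" using edge(1) M_ge_1 by (intro mult_left_mono) simp_all
  moreover have "296 * M \<le> c \<Longrightarrow> N * (296 * M) \<le> N * c" by (intro mult_left_mono) simp_all
  ultimately show ?thesis using edge(2) abs_pert_le_1[of x y] unfolding c'
    by (smt (verit))
qed

lemma gp_connected:
  assumes "p \<in> Vs" "q \<in> Vs"
  shows "\<exists>xs. is_walk Vs G xs \<and> hd xs = p \<and> last xs = q"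
proof -
  obtain a P b Q where pq: "p = (a, P)" "q = (b, Q)" and ab: "a \<in> V" "b \<in> V"
    using assms by (cases p, cases q) (auto simp: gp_verts_def)
  consider "p = q" | "p \<noteq> q" "P = PA \<or> Q = PA" | "P \<noteq> PA" "Q \<noteq> PA" by blast
  then show ?thesis
  proof cases
    case 1
    then show ?thesis using assms by (intro exI[of _ "[p]"]) auto
  next
    case 2
    then show ?thesis using ab unfolding pq
      by (intro exI[of _ "[(a, P), (b, Q)]"]) (cases P; cases Q; auto simp: gp_def gp_verts_def)
  next
    case 3
    then show ?thesis using ab unfolding pq
      by (intro exI[of _ "[(a, P), (a, PA), (b, Q)]"]) (cases P; cases Q; auto simp: gp_def gp_verts_def)
  qed
qed

lemma sum_level_ge:
  assumes "p \<in> Vs" "snd p \<noteq> PA"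
  shows "8 * int (card V) - 2 \<le> (\<Sum>q\<in>Vs. level p q)"
proof -
  obtain u0 P0 where p: "p = (u0, P0)" and u0: "u0 \<in> V"
    using assms(1) by (cases p) (auto simp: gp_verts_def)
  have "(\<Sum>v\<in>V. if v = u0 then 6 else 8) = 6 + (\<Sum>v\<in>V - {u0}. 8 :: int)"
    using finite_V u0 by (simp add: sum.remove)
  also have "\<dots> = 8 * int (card V) - 2"
    using finite_V u0 card_V_ge_1 by (simp add: of_nat_diff)
  finally have "8 * int (card V) - 2 = (\<Sum>v\<in>V. if v = u0 then 6 else 8)" ..
  also have "\<dots> \<le> (\<Sum>v\<in>V. level p (v, PA) + level p (v, PB) + level p (v, PB')
                              + level p (v, PC) + level p (v, PC'))"
    using assms(2) unfolding p by (intro sum_mono) (cases P0; auto simp: level_def)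
  finally show ?thesis unfolding sum_gp_verts .
qed

lemma dist_sum_nonA_ge:
  assumes p: "p \<in> Vs" "snd p \<noteq> PA"
  shows "296 * M * (8 * int (card V) - 2) \<le> dist_sum Vs G p"
    and "(N * (296 * M) - 1) * (8 * int (card V) - 2) \<le> dist_sum Vs GS p"
proof -
  have lower: "K * (8 * int (card V) - 2) \<le> dist_sum Vs g p"
    if "0 \<le> K" "potential Vs g (\<lambda>q. K * level p q)"
      and "\<And>xs. is_walk Vs g xs \<longleftrightarrow> is_walk Vs G xs" for K g
  proof -
    have "K * (8 * int (card V) - 2) \<le> K * (\<Sum>q\<in>Vs. level p q)"
      using sum_level_ge[OF p] that(1) by (rule mult_left_mono)
    also have "\<dots> = (\<Sum>q\<in>Vs. K * level p q)" by (simp add: sum_distrib_left)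
    also have "\<dots> \<le> dist_sum Vs g p"
    proof (rule dist_sum_ge_potential_sum[OF that(2)])
      fix q assume "q \<in> Vs"
      then show "\<exists>xs. is_walk Vs g xs \<and> hd xs = p \<and> last xs = q"
        using gp_connected[OF p(1)] that(3) by presburger
    qed (simp add: level_def)
    finally show ?thesis .
  qed
  have "N * M \<ge> 4" using card_V_ge_1 M_ge_1 mult_mono[of 4 N 1 M] by simp
  then show "(N * (296 * M) - 1) * (8 * int (card V) - 2) \<le> dist_sum Vs GS p"
    using gpS_edge_level[OF p(2)] is_walk_gpS_iff
    by (intro lower potential_scaled_level) auto
  show "296 * M * (8 * int (card V) - 2) \<le> dist_sum Vs G p"
    using gp_edge_level[OF p(2)] M_ge_1 by (intro lower potential_scaled_level) force+
qed

lemma A_vertices_dominate: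
  assumes "p \<in> Vs" "snd p \<noteq> PA" "u \<in> V"
  shows "dist_sum Vs G (u, PA) < dist_sum Vs G p" and "dist_sum Vs GS (u, PA) < dist_sum Vs GS p"
proof -
  define n where "n = int (card V)"
  have n: "1 \<le> n" using card_V_ge_1 by (simp add: n_def)
  have N: "N = 4 * n" by (simp add: n_def)
  have A_le: "dist_sum Vs G (u, PA) \<le> n * (1600 * M)"
    using dist_sum_A_le[OF assms(3)] by (simp add: n_def)
  have "n * (1600 * M) < 296 * M * (8 * n - 2)"
    using M_ge_1 n by (simp add: algebra_simps)
  then show "dist_sum Vs G (u, PA) < dist_sum Vs G p"
    using A_le dist_sum_nonA_ge(1)[OF assms(1,2)] unfolding n_def by linarith
  have "704 * (n * M) \<le> (3072 * n - 2368) * (n * M)"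
    using n M_ge_1 by (intro mult_right_mono) auto
  moreover have "n \<le> n * M" using n M_ge_1 by (simp add: mult_le_cancel_left1)
  moreover have "(N * (296 * M) - 1) * (8 * n - 2) - N * (n * (1600 * M))
      = (3072 * n - 2368) * (n * M) - 8 * n + 2"
    unfolding N by (simp add: algebra_simps)
  ultimately have "N * (n * (1600 * M)) < (N * (296 * M) - 1) * (8 * n - 2)"
    using n by linarith
  moreover have "N * dist_sum Vs G (u, PA) \<le> N * (n * (1600 * M))"
    using A_le n by (intro mult_left_mono) (simp_all add: N)
  moreover have "0 \<le> (if (u, PA) \<in> S then n else 0)" using n by simp
  ultimately show "dist_sum Vs GS (u, PA) < dist_sum Vs GS p"
    using dist_sum_gpS_A[OF assms(3)] dist_sum_nonA_ge(2)[OF assms(1,2)] unfolding n_def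
    by linarith
qed

lemma median_value_eq_Min_A:
  assumes "g \<in> {G, GS}"
  shows "median_value Vs g = Min ((\<lambda>v. dist_sum Vs g (v, PA)) ` V)"
proof -
  have "median_value Vs g = Min (dist_sum Vs g ` (\<lambda>v. (v, PA)) ` V)"
    unfolding median_value_def
  proof (rule Min_image_eq_Min_image_subset)
    fix p assume p: "p \<in> Vs"
    show "\<exists>q\<in>(\<lambda>v. (v, PA)) ` V. dist_sum Vs g q \<le> dist_sum Vs g p"
    proof (cases "snd p = PA")
      case True
      then show ?thesis using p by (intro bexI[of _ p]) (auto simp: gp_verts_def image_iff prod_eq_iff)
    next
      case False
      obtain u where "u \<in> V" using V_nonempty by blast
      then show ?thesis
        using A_vertices_dominate[OF p False] assms by (intro bexI[of _ "(u, PA)"]) force+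
    qed
  qed (use finite_gp_verts V_nonempty in \<open>auto simp: gp_verts_def\<close>)
  then show ?thesis by (simp add: image_image)
qed

lemma median_value_gpS:
  "median_value Vs GS = N * median_value Vs G
     - (if \<exists>p\<in>S. dist_sum Vs G p = median_value Vs G then int (card V) else 0)"
proof -
  let ?D = "\<lambda>v. dist_sum Vs G (v, PA)"
  have "median_value Vs GS = Min ((\<lambda>v. N * ?D v - (if (v, PA) \<in> S then int (card V) else 0)) ` V)"
    using median_value_eq_Min_A[of GS] dist_sum_gpS_A by (simp cong: image_cong)
  also have "\<dots> = N * Min (?D ` V)
      - (if \<exists>v\<in>V. (v, PA) \<in> S \<and> ?D v = Min (?D ` V) then int (card V) else 0)"
    using finite_V V_nonempty by (rule Min_scaled_minus_indicator) simp_all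
  also have "(\<exists>v\<in>V. (v, PA) \<in> S \<and> ?D v = Min (?D ` V)) \<longleftrightarrow>
      (\<exists>p\<in>S. dist_sum Vs G p = median_value Vs G)"
    using S_subset_A median_value_eq_Min_A[of G] by auto
  finally show ?thesis using median_value_eq_Min_A[of G] by simp
qed

end

theorem mainTheorem8:
  fixes V :: "'a set" and E :: "('a \<times> 'a) set" and w :: "'a \<Rightarrow> 'a \<Rightarrow> int"
    and M :: int and S :: "('a \<times> part) set"
  assumes "finite V" and "odd (card V)"
    and "E \<subseteq> V \<times> V"
    and "M \<ge> 1"
    and "\<forall>(u, v)\<in>E. \<bar>w u v\<bar> \<le> M"
    and "S \<subseteq> (\<lambda>u. (u, PA)) ` V"
  shows "odd (median_value (gp_verts V) (gpS V E w M S)) \<longleftrightarrow>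
    (\<exists>p\<in>S. dist_sum (gp_verts V) (gp V E w M) p = median_value (gp_verts V) (gp V E w M))"
proof -
  have "V \<noteq> {}" using \<open>odd (card V)\<close> by auto
  then interpret gp_construction V E w M S
    using assms by unfold_locales auto
  show ?thesis using median_value_gpS \<open>odd (card V)\<close> by simp
qed

end
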